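(* Let $F$ be a continuous distribution function with a density that is symmetric about $\theta$ and unimodal, and let $0 \le \varepsilon < 1/2$ and $0 \le \delta < (1-\varepsilon)/2$. Then $$\sup_{G \in \mathcal{F}_\delta(F)} \Big[ G^{-1}\Big(\frac{1+\varepsilon}{2}\Big) - G^{-1}\Big(\frac{1-\varepsilon}{2}\Big)\Big] = F^{-1}\Big\{\frac{1+\varepsilon}{2(1-\delta)}\Big\} - F^{-1}\Big\{\frac{1-\varepsilon}{2(1-\delta)}\Big\},$$ and the supremum is approached by $G_m = (1-\delta)F + \delta\,\delta_m$ as $m \to \infty$, where $\delta_m$ is the point mass at $m$.
   Context: For a distribution function $G$, $G^{-1}(p) = \inf\{x : G(x) \ge p\}$. For $0 \le \delta < 1/2$, $\mathcal{F}_\delta(F) = \{G : G = (1-\delta)F + \delta H,\ H \text{ an arbitrary distribution on } \mathbb{R}\}$. *)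

theory Defs
  imports "HOL-Analysis.Analysis"
begin

definition is_distfun :: "(real \<Rightarrow> real) \<Rightarrow> bool" where
  "is_distfun G \<longleftrightarrow> mono G \<and> (\<forall>x. continuous (at_right x) G)
     \<and> (G \<longlongrightarrow> 0) at_bot \<and> (G \<longlongrightarrow> 1) at_top"

definition quantile :: "(real \<Rightarrow> real) \<Rightarrow> real \<Rightarrow> real" where
  "quantile G p = Inf {x. G x \<ge> p}"

definition contam :: "real \<Rightarrow> (real \<Rightarrow> real) \<Rightarrow> (real \<Rightarrow> real) set" where
  "contam \<delta> F = {G. \<exists>H. is_distfun H \<and> G = (\<lambda>x. (1 - \<delta>) * F x + \<delta> * H x)}"

definition pointmass :: "real \<Rightarrow> real \<Rightarrow> real" where
  "pointmass m x = (if m \<le> x then 1 else 0)"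

end

theory Submission
  imports Defs
begin

(* Write G = (1 - \<delta>) F + \<delta> H and a = G^{-1}((1 - \<epsilon>)/2). If the spread of G exceeded
   L = F^{-1}(P2) - F^{-1}(P1), with P_i the levels of the statement, the window [a, a + L] would
   carry F-mass less than P2 - P1. But a lies between c1 = F^{-1}(P1) and the mirror image of
   c2 = F^{-1}(P2), and for a symmetric unimodal density the mass of a window of fixed length
   increases as the window moves towards the centre, so it is at least its value P2 - P1 at the
   endpoints. Putting the contaminating mass far to the right attains the bound. *)

lemma filterlim_const_minus_at_bot:
  fixes g :: "'a \<Rightarrow> real"
  assumes "filterlim g at_top F"
  shows "filterlim (\<lambda>x. c - g x) at_bot F"
proof -
  have "filterlim (\<lambda>x. - c + g x) at_top F"
    by (rule filterlim_tendsto_add_at_top[OF tendsto_const assms])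
  then show ?thesis by (simp add: filterlim_uminus_at_top)
qed

lemma distfun_mono: "is_distfun G \<Longrightarrow> x \<le> y \<Longrightarrow> G x \<le> G y"
  unfolding is_distfun_def mono_def by blast

lemma distfun_nonneg:
  assumes "is_distfun G" shows "0 \<le> G x"
proof (rule ccontr)
  assume "\<not> 0 \<le> G x"
  then have "eventually (\<lambda>t. G x < G t) at_bot"
    using assms order_tendstoD(1) unfolding is_distfun_def by force
  then obtain N where "\<And>t. t \<le> N \<Longrightarrow> G x < G t"
    unfolding eventually_at_bot_linorder by blast
  then have "G x < G (min N x)" by simp
  then show False using distfun_mono[OF assms min.cobounded2, of N x] by simp
qed

lemma distfun_le_1:
  assumes "is_distfun G" shows "G x \<le> 1"
proof (rule ccontr)
  assume "\<not> G x \<le> 1"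
  then have "eventually (\<lambda>t. G t < G x) at_top"
    using assms order_tendstoD(2) unfolding is_distfun_def by force
  then obtain N where "\<And>t. t \<ge> N \<Longrightarrow> G t < G x"
    unfolding eventually_at_top_linorder by blast
  then have "G (max N x) < G x" by simp
  then show False using distfun_mono[OF assms max.cobounded2, of x N] by simp
qed

lemma bdd_below_quantile_set:
  assumes "is_distfun G" "0 < p"
  shows "bdd_below {x. p \<le> G x}"
proof -
  have "eventually (\<lambda>t. G t < p) at_bot"
    using assms order_tendstoD(2) unfolding is_distfun_def by force
  then obtain N where "\<And>t. t \<le> N \<Longrightarrow> G t < p"
    unfolding eventually_at_bot_linorder by blast
  then show ?thesis by (intro bdd_belowI[of _ N]) (metis linorder_le_cases mem_Collect_eq not_less)
qed

lemma quantile_le: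
  assumes "is_distfun G" "0 < p" "p \<le> G x"
  shows "quantile G p \<le> x"
  unfolding quantile_def using assms bdd_below_quantile_set by (intro cInf_lower) auto

lemma distfun_less_quantile:
  assumes "is_distfun G" "0 < p" "x < quantile G p"
  shows "G x < p"
  using quantile_le[OF assms(1,2), of x] assms(3) by linarith

lemma distfun_quantile_ge:
  assumes G: "is_distfun G" and p: "0 < p" "p < 1"
  shows "p \<le> G (quantile G p)"
proof (rule ccontr)
  let ?q = "quantile G p"
  assume "\<not> p \<le> G ?q"
  moreover have "(G \<longlongrightarrow> G ?q) (at_right ?q)"
    using G unfolding is_distfun_def continuous_within by blast
  ultimately have "eventually (\<lambda>t. G t < p) (at_right ?q)"
    using order_tendstoD(2) by force
  then obtain b where b: "?q < b" "\<And>y. ?q < y \<Longrightarrow> y < b \<Longrightarrow> G y < p"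
    unfolding eventually_at_right_field by blast
  have "eventually (\<lambda>t. p < G t) at_top"
    using G p order_tendstoD(1) unfolding is_distfun_def by force
  then obtain N where "p < G N"
    unfolding eventually_at_top_linorder by blast
  then have "{x. p \<le> G x} \<noteq> {}" by (auto intro: less_imp_le)
  then have "b \<le> quantile G p"
    unfolding quantile_def
  proof (rule cInf_greatest)
    fix s assume s: "s \<in> {x. p \<le> G x}"
    then have "?q \<le> s" "s \<noteq> ?q"
      using distfun_less_quantile[OF G p(1), of s] \<open>\<not> p \<le> G ?q\<close> by force+
    then show "b \<le> s" using b(2)[of s] s by force
  qed
  then show False using b(1) by simp
qed

lemma quantile_mono:
  assumes G: "is_distfun G" and "0 < p" "p \<le> q" "q < 1"
  shows "quantile G p \<le> quantile G q"
  using quantile_le[OF G, of p "quantile G q"] distfun_quantile_ge[OF G, of q] assms by linarith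

lemma distfun_quantile_eq:
  assumes G: "is_distfun G" and cont: "isCont G (quantile G p)" and p: "0 < p" "p < 1"
  shows "G (quantile G p) = p"
proof (rule antisym[OF _ distfun_quantile_ge[OF G p]], rule ccontr)
  let ?q = "quantile G p"
  assume "\<not> G ?q \<le> p"
  moreover have "(G \<longlongrightarrow> G ?q) (at_left ?q)"
    using cont by (simp add: isCont_def filterlim_at_split)
  ultimately have "eventually (\<lambda>t. p < G t) (at_left ?q)"
    using order_tendstoD(1) by force
  then obtain b where "b < ?q" "\<And>y. b < y \<Longrightarrow> y < ?q \<Longrightarrow> p < G y"
    unfolding eventually_at_left_field by blast
  then have "p < G ((b + ?q) / 2)" "G ((b + ?q) / 2) < p"
    using distfun_less_quantile[OF G p(1), of "(b + ?q) / 2"] by simp_all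
  then show False by simp
qed

lemma is_distfun_pointmass: "is_distfun (pointmass m)"
  unfolding is_distfun_def
proof (intro conjI allI)
  show "mono (pointmass m)" unfolding mono_def pointmass_def by auto
  fix x
  have "eventually (\<lambda>y. pointmass m y = pointmass m x) (at_right x)"
    unfolding eventually_at_right_field
    by (rule exI[of _ "if m \<le> x then x + 1 else m"]) (auto simp: pointmass_def)
  then show "continuous (at_right x) (pointmass m)"
    unfolding continuous_within by (rule tendsto_eventually)
next
  show "(pointmass m \<longlongrightarrow> 0) at_bot"
    by (rule tendsto_eventually, use eventually_le_at_bot[of "m - 1"] in \<open>rule eventually_mono\<close>)
       (simp add: pointmass_def)
  show "(pointmass m \<longlongrightarrow> 1) at_top"
    by (rule tendsto_eventually, use eventually_ge_at_top[of m] in \<open>rule eventually_mono\<close>)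
       (simp add: pointmass_def)
qed

lemma is_distfun_mixture:
  assumes F: "is_distfun F" and H: "is_distfun H" and d: "0 \<le> d" "d \<le> 1"
  shows "is_distfun (\<lambda>x. (1 - d) * F x + d * H x)"
  unfolding is_distfun_def
proof (intro conjI allI)
  show "mono (\<lambda>x. (1 - d) * F x + d * H x)"
    using distfun_mono[OF F] distfun_mono[OF H] d
    by (auto simp: mono_def intro!: add_mono mult_left_mono)
  fix x
  show "continuous (at_right x) (\<lambda>x. (1 - d) * F x + d * H x)"
    using F H unfolding is_distfun_def by (intro continuous_intros) auto
next
  show "((\<lambda>x. (1 - d) * F x + d * H x) \<longlongrightarrow> 0) at_bot"
    using tendsto_add[OF tendsto_mult_right[of F 0 at_bot "1 - d"] tendsto_mult_right[of H 0 at_bot d]]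
      F H unfolding is_distfun_def by (simp add: mult.commute)
  show "((\<lambda>x. (1 - d) * F x + d * H x) \<longlongrightarrow> 1) at_top"
    using tendsto_add[OF tendsto_mult_right[of F 1 at_top "1 - d"] tendsto_mult_right[of H 1 at_top d]]
      F H unfolding is_distfun_def by (simp add: mult.commute)
qed

lemma quantile_mixture_pointmass:
  assumes F: "is_distfun F" and P: "0 < P" "P < 1" and d: "0 \<le> d" "d < 1"
    and m: "quantile F P < m"
  shows "quantile (\<lambda>x. (1 - d) * F x + d * pointmass m x) ((1 - d) * P) = quantile F P"
proof (unfold quantile_def[of "\<lambda>x. (1 - d) * F x + d * pointmass m x"], rule cInf_eq_minimum)
  show "quantile F P \<in> {x. (1 - d) * P \<le> (1 - d) * F x + d * pointmass m x}"
    using distfun_quantile_ge[OF F P] m d by (simp add: pointmass_def)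
next
  fix x assume "x \<in> {x. (1 - d) * P \<le> (1 - d) * F x + d * pointmass m x}"
  then have "m \<le> x \<or> P \<le> F x"
    using d by (auto simp: pointmass_def split: if_splits)
  then show "quantile F P \<le> x"
    using m quantile_le[OF F P(1)] by force
qed

lemma contamination_levels:
  fixes \<epsilon> \<delta> :: real
  assumes "0 \<le> \<epsilon>" "0 \<le> \<delta>" "\<delta> < (1 - \<epsilon>) / 2"
  shows "0 < (1 - \<epsilon>) / (2 * (1 - \<delta>))"
    and "(1 - \<epsilon>) / (2 * (1 - \<delta>)) \<le> (1 + \<epsilon>) / (2 * (1 - \<delta>))"
    and "(1 + \<epsilon>) / (2 * (1 - \<delta>)) < 1"
    and "(1 - \<delta>) * ((1 - \<epsilon>) / (2 * (1 - \<delta>))) = (1 - \<epsilon>) / 2"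
    and "(1 - \<delta>) * ((1 + \<epsilon>) / (2 * (1 - \<delta>))) = (1 + \<epsilon>) / 2"
proof -
  have "\<delta> < 1" using assms by simp
  then show "(1 - \<delta>) * ((1 - \<epsilon>) / (2 * (1 - \<delta>))) = (1 - \<epsilon>) / 2"
    and "(1 - \<delta>) * ((1 + \<epsilon>) / (2 * (1 - \<delta>))) = (1 + \<epsilon>) / 2"
    by (simp_all add: field_simps)
qed (use assms in \<open>auto simp: divide_right_mono pos_divide_less_eq\<close>)

lemma pointmass_contaminated_spread:
  assumes F: "is_distfun F" and eps: "0 \<le> \<epsilon>" and del: "0 \<le> \<delta>" "\<delta> < (1 - \<epsilon>) / 2"
    and m: "quantile F ((1 + \<epsilon>) / (2 * (1 - \<delta>))) < m"
  shows "(let G = (\<lambda>x. (1 - \<delta>) * F x + \<delta> * pointmass m x)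
          in quantile G ((1 + \<epsilon>) / 2) - quantile G ((1 - \<epsilon>) / 2))
    = quantile F ((1 + \<epsilon>) / (2 * (1 - \<delta>))) - quantile F ((1 - \<epsilon>) / (2 * (1 - \<delta>)))"
proof -
  define P1 P2 where "P1 = (1 - \<epsilon>) / (2 * (1 - \<delta>))" and "P2 = (1 + \<epsilon>) / (2 * (1 - \<delta>))"
  have d: "0 \<le> \<delta>" "\<delta> < 1" using del eps by simp_all
  have P: "0 < P1" "P1 \<le> P2" "P2 < 1"
    and p: "(1 - \<delta>) * P1 = (1 - \<epsilon>) / 2" "(1 - \<delta>) * P2 = (1 + \<epsilon>) / 2"
    using contamination_levels[OF eps del] by (simp_all add: P1_def P2_def)
  have q: "quantile (\<lambda>x. (1 - \<delta>) * F x + \<delta> * pointmass m x) ((1 - \<delta>) * P) = quantile F P"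
    if "0 < P" "P \<le> P2" for P
  proof (rule quantile_mixture_pointmass[OF F that(1) _ d])
    show "P < 1" using that P by linarith
    show "quantile F P < m" using quantile_mono[OF F that P(3)] m by (simp add: P2_def)
  qed
  show ?thesis
    unfolding Let_def P1_def[symmetric] P2_def[symmetric] p[symmetric]
    using q[of P1] q[of P2] P by simp
qed

locale symmetric_unimodal_distfun =
  fixes F f :: "real \<Rightarrow> real" and \<theta> :: real
  assumes F_distfun: "is_distfun F"
    and F_cont: "continuous_on UNIV F"
    and f_density: "\<And>x. (f has_integral F x) {..x}"
    and f_symm: "\<And>x. f (\<theta> + x) = f (\<theta> - x)"
    and f_antimono: "antimono_on {\<theta>..} f"
begin

lemmas F_mono = distfun_mono[OF F_distfun]

lemma F_at_bot: "(F \<longlongrightarrow> 0) at_bot" and F_at_top: "(F \<longlongrightarrow> 1) at_top"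
  using F_distfun by (simp_all add: is_distfun_def)

lemma f_le_closer_to_centre:
  assumes "\<bar>v - \<theta>\<bar> \<le> \<bar>u - \<theta>\<bar>" shows "f u \<le> f v"
proof -
  have reflect: "f x = f (\<theta> + \<bar>x - \<theta>\<bar>)" for x
    using f_symm[of "\<theta> - x"] by (cases "\<theta> \<le> x") auto
  have "f (\<theta> + \<bar>u - \<theta>\<bar>) \<le> f (\<theta> + \<bar>v - \<theta>\<bar>)"
    using f_antimono assms unfolding monotone_on_def by auto
  then show ?thesis using reflect[of u] reflect[of v] by simp
qed

lemma has_integral_density:
  assumes "a \<le> b" shows "(f has_integral (F b - F a)) {a..b}"
proof -
  have "f integrable_on cbox a b"
    using f_density by (rule integrable_on_subcbox[OF has_integral_integrable]) auto
  then have i: "(f has_integral integral {a..b} f) {a..b}" by (simp add: has_integral_integral)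
  have "(f has_integral (F a + integral {a..b} f)) ({..a} \<union> {a..b})"
    by (rule has_integral_Un[OF f_density i]) (rule negligible_subset[OF negligible_sing[of a]], auto)
  moreover have "{..a} \<union> {a..b} = {..b}" using assms by auto
  ultimately have "F b = F a + integral {a..b} f"
    using f_density[of b] has_integral_unique by metis
  then show ?thesis using i by simp
qed

lemma window_mass_mono_left:
  assumes "t1 \<le> t2" "t2 + h / 2 \<le> \<theta>" "0 \<le> h"
  shows "F (t1 + h) - F t1 \<le> F (t2 + h) - F t2"
proof -
  have "(f has_integral (F (t2 + h) - F (t1 + h))) {t1 + h..t2 + h}"
    using has_integral_density assms by simp
  from has_integral_shift_real_ivl[OF this, of h]
  have "((\<lambda>x. f (x + h)) has_integral (F (t2 + h) - F (t1 + h))) {t1..t2}" by simp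
  then have "F t2 - F t1 \<le> F (t2 + h) - F (t1 + h)"
    by (rule has_integral_le[OF has_integral_density[OF assms(1)]])
       (use assms in \<open>auto intro: f_le_closer_to_centre\<close>)
  then show ?thesis by simp
qed

lemma window_mass_antimono_right:
  assumes "t1 \<le> t2" "\<theta> \<le> t1 + h / 2" "0 \<le> h"
  shows "F (t2 + h) - F t2 \<le> F (t1 + h) - F t1"
proof -
  have "(f has_integral (F (t2 + h) - F (t1 + h))) {t1 + h..t2 + h}"
    using has_integral_density assms by simp
  from has_integral_shift_real_ivl[OF this, of h]
  have "((\<lambda>x. f (x + h)) has_integral (F (t2 + h) - F (t1 + h))) {t1..t2}" by simp
  then have "F (t2 + h) - F (t1 + h) \<le> F t2 - F t1"
    by (rule has_integral_le[OF _ has_integral_density[OF assms(1)]])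
       (use assms in \<open>auto intro: f_le_closer_to_centre\<close>)
  then show ?thesis by simp
qed

lemma F_reflect: "F (2 * \<theta> - x) = 1 - F x"
proof -
  have mirror: "F y - F x + F (2 * \<theta> - y) = F (2 * \<theta> - x)" if "x \<le> y" for y
  proof -
    have reflected: "((\<lambda>s. f (- s)) has_integral (F y - F x)) {-y..-x}"
      using has_integral_density[OF that] by simp
    have "f (- (s + - (2 * \<theta>))) = f s" for s
      using f_symm[of "\<theta> - s"] by (simp add: algebra_simps)
    then have "(f has_integral (F y - F x)) {2 * \<theta> - y..2 * \<theta> - x}"
      using has_integral_shift_real_ivl[OF reflected, of "- (2 * \<theta>)"] by simp
    moreover have "(f has_integral (F (2 * \<theta> - x) - F (2 * \<theta> - y))) {2 * \<theta> - y..2 * \<theta> - x}"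
      using has_integral_density[of "2 * \<theta> - y" "2 * \<theta> - x"] that by simp
    ultimately have "F y - F x = F (2 * \<theta> - x) - F (2 * \<theta> - y)"
      by (rule has_integral_unique)
    then show ?thesis by simp
  qed
  have "((\<lambda>y. F (2 * \<theta> - y)) \<longlongrightarrow> 0) at_top"
    by (rule filterlim_compose[OF F_at_bot filterlim_const_minus_at_bot[OF filterlim_ident]])
  then have "((\<lambda>y. F y - F x + F (2 * \<theta> - y)) \<longlongrightarrow> 1 - F x + 0) at_top"
    by (intro tendsto_add tendsto_diff F_at_top tendsto_const)
  moreover have "eventually (\<lambda>y. F y - F x + F (2 * \<theta> - y) = F (2 * \<theta> - x)) at_top"
    using eventually_ge_at_top[of x] by (rule eventually_mono) (rule mirror)
  then have "((\<lambda>y. F y - F x + F (2 * \<theta> - y)) \<longlongrightarrow> F (2 * \<theta> - x)) at_top"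
    by (rule tendsto_eventually)
  ultimately show ?thesis using tendsto_unique[OF trivial_limit_at_top_linorder] by force
qed

(* A flat stretch [x, y] left of the centre forces every window of length y - x further left
   to be flat too, so F is (y - x)-periodic there and its value at x is its limit 0 at -\<infinity>. *)
lemma F_flat_left_of_centre:
  assumes "x < y" "x + y \<le> 2 * \<theta>" "F x = F y"
  shows "F x = 0"
proof -
  define h where "h = y - x"
  have h: "0 < h" "y = x + h" using assms(1) by (auto simp: h_def)
  have shift: "F (t + h) = F t" if "t \<le> x" for t
    using window_mass_mono_left[of t x h] F_mono[of t "t + h"] that h assms by simp
  have periodic: "F (x - real n * h) = F x" for n
  proof (induction n)
    case (Suc n)
    have "F (x - real (Suc n) * h) = F (x - real (Suc n) * h + h)"
      using shift[of "x - real (Suc n) * h"] h by simp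
    then show ?case using Suc by (simp add: algebra_simps)
  qed simp
  have "filterlim (\<lambda>n. real n * h) at_top sequentially"
    using h(1) by (intro filterlim_at_top_mult_tendsto_pos[OF tendsto_const] filterlim_real_sequentially)
  then have "(\<lambda>n. F (x - real n * h)) \<longlonglongrightarrow> 0"
    by (rule filterlim_compose[OF F_at_bot filterlim_const_minus_at_bot])
  then show ?thesis by (simp add: periodic tendsto_const_iff)
qed

lemma F_strict_mono:
  assumes "x < y" "0 < F x" "F y < 1"
  shows "F x < F y"
proof (rule ccontr)
  assume "\<not> F x < F y"
  then have flat: "F x = F y" using F_mono[of x y] assms(1) by simp
  show False
  proof (cases "x + y \<le> 2 * \<theta>")
    case True
    then show False using F_flat_left_of_centre[OF assms(1) True flat] assms(2) by simp
  next
    case False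
    have "F (2 * \<theta> - y) = 0"
      using F_flat_left_of_centre[of "2 * \<theta> - y" "2 * \<theta> - x"] False assms(1) flat
      by (simp add: F_reflect)
    then show False using F_reflect[of y] assms(3) by simp
  qed
qed

(* The windows starting at u and at v are mirror images of each other, so they carry the same
   mass, and every window starting in between lies closer to the centre. *)
lemma window_mass_between_mirror_windows:
  assumes "u \<le> t" "t \<le> v" "u + h + v = 2 * \<theta>" "0 \<le> h"
  shows "F (v + h) - F v \<le> F (t + h) - F t"
proof (cases "t + h / 2 \<le> \<theta>")
  case True
  have "u + h = 2 * \<theta> - v" "u = 2 * \<theta> - (v + h)" using assms(3) by simp_all
  then have "F (u + h) - F u = F (v + h) - F v" by (simp only: F_reflect)
  then show ?thesis using window_mass_mono_left[OF assms(1) True assms(4)] by simp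
next
  case False
  then show ?thesis using window_mass_antimono_right[OF assms(2) _ assms(4)] by simp
qed

lemma window_mass_ge:
  assumes "c1 \<le> c2" "F c2 < 1" "0 < F c1" "a \<le> c1" "1 - F c2 \<le> F a"
  shows "F c2 - F c1 \<le> F (a + (c2 - c1)) - F a"
proof -
  have "2 * \<theta> - c2 \<le> a"
  proof (rule ccontr)
    assume "\<not> 2 * \<theta> - c2 \<le> a"
    moreover have "0 < F c2" using assms F_mono[of c1 c2] by simp
    ultimately have "F a < F (2 * \<theta> - c2)"
      using F_strict_mono[of a "2 * \<theta> - c2"] assms(2,5) by (simp add: F_reflect)
    then show False using assms(5) by (simp add: F_reflect)
  qed
  then show ?thesis
    using window_mass_between_mirror_windows[of "2 * \<theta> - c2" a c1 "c2 - c1"] assms by simp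
qed

lemma F_quantile_eq:
  assumes "0 < p" "p < 1" shows "F (quantile F p) = p"
  using distfun_quantile_eq[OF F_distfun _ assms] F_cont
  by (simp add: continuous_on_eq_continuous_at)

lemma contaminated_spread_le:
  assumes H: "is_distfun H" and G: "G = (\<lambda>x. (1 - \<delta>) * F x + \<delta> * H x)"
    and eps: "0 \<le> \<epsilon>" and del: "0 \<le> \<delta>" "\<delta> < (1 - \<epsilon>) / 2"
  shows "quantile G ((1 + \<epsilon>) / 2) - quantile G ((1 - \<epsilon>) / 2)
    \<le> quantile F ((1 + \<epsilon>) / (2 * (1 - \<delta>))) - quantile F ((1 - \<epsilon>) / (2 * (1 - \<delta>)))"
proof (rule ccontr)
  define P1 P2 where "P1 = (1 - \<epsilon>) / (2 * (1 - \<delta>))" and "P2 = (1 + \<epsilon>) / (2 * (1 - \<delta>))"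
  define c1 c2 where "c1 = quantile F P1" and "c2 = quantile F P2"
  define a where "a = quantile G ((1 - \<epsilon>) / 2)"
  have d: "0 < 1 - \<delta>" using del eps by simp
  have P: "0 < P1" "P1 \<le> P2" "P2 < 1"
    and p1: "(1 - \<delta>) * P1 = (1 - \<epsilon>) / 2" and p2: "(1 - \<delta>) * P2 = (1 + \<epsilon>) / 2"
    using contamination_levels[OF eps del] by (simp_all add: P1_def P2_def)
  have Fc: "F c1 = P1" "F c2 = P2" using F_quantile_eq P by (simp_all add: c1_def c2_def)
  have c12: "c1 \<le> c2" unfolding c1_def c2_def using quantile_mono[OF F_distfun P] .
  have G_distfun: "is_distfun G" using is_distfun_mixture[OF F_distfun H] del d G by simp
  have H_mono: "\<delta> * H a \<le> \<delta> * H (a + (c2 - c1))"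
    using distfun_mono[OF H, of a] c12 del by (simp add: mult_left_mono)
  assume "\<not> quantile G ((1 + \<epsilon>) / 2) - a \<le> c2 - c1"
  then have "G (a + (c2 - c1)) < (1 + \<epsilon>) / 2"
    by (intro distfun_less_quantile[OF G_distfun]) (use eps in auto)
  then have upper: "(1 - \<delta>) * F (a + (c2 - c1)) + \<delta> * H a < (1 - \<delta>) * P2"
    using H_mono p2 G by simp
  have lower: "(1 - \<delta>) * P1 \<le> (1 - \<delta>) * F a + \<delta> * H a"
    using distfun_quantile_ge[OF G_distfun, of "(1 - \<epsilon>) / 2"] eps del p1 G
    by (simp add: a_def)
  have "a \<le> c1"
  proof (rule ccontr)
    assume "\<not> a \<le> c1"
    then have "P2 \<le> F (a + (c2 - c1))" using F_mono[of c2] Fc by simp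
    then have "(1 - \<delta>) * P2 \<le> (1 - \<delta>) * F (a + (c2 - c1))"
      using d by (simp add: mult_left_mono)
    moreover have "0 \<le> \<delta> * H a" using distfun_nonneg[OF H] del by simp
    ultimately show False using upper by linarith
  qed
  moreover have "1 - P2 \<le> F a"
  proof -
    have "\<delta> * H a \<le> \<delta>" using distfun_le_1[OF H] del by (simp add: mult_left_le)
    moreover have "(1 - \<delta>) * (1 - P2) = (1 - \<delta>) * P1 - \<delta>"
      using p1 p2 by (simp add: right_diff_distrib)
    ultimately have "(1 - \<delta>) * (1 - P2) \<le> (1 - \<delta>) * F a" using lower by linarith
    then show ?thesis using d by simp
  qed
  ultimately have "P2 - P1 \<le> F (a + (c2 - c1)) - F a"
    using window_mass_ge[OF c12] Fc P by simp
  then have "(1 - \<delta>) * P2 - (1 - \<delta>) * P1 \<le> (1 - \<delta>) * F (a + (c2 - c1)) - (1 - \<delta>) * F a"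
    using d by (simp add: mult_left_mono flip: right_diff_distrib)
  then show False using upper lower by linarith
qed

end

theorem mainTheorem6:
  fixes F f :: "real \<Rightarrow> real" and \<theta> \<epsilon> \<delta> :: real
  assumes F_df: "is_distfun F"
    and F_cont: "continuous_on UNIV F"
    and f_nonneg: "\<And>x. f x \<ge> 0"
    and f_density: "\<And>x. (f has_integral F x) {..x}"
    and f_symm: "\<And>x. f (\<theta> + x) = f (\<theta> - x)"
    and f_unimodal: "mono_on {..\<theta>} f" "antimono_on {\<theta>..} f"
    and eps: "0 \<le> \<epsilon>" "\<epsilon> < 1/2"
    and del: "0 \<le> \<delta>" "\<delta> < (1 - \<epsilon>) / 2"
  shows "(SUP G\<in>contam \<delta> F. quantile G ((1 + \<epsilon>) / 2) - quantile G ((1 - \<epsilon>) / 2))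
           = quantile F ((1 + \<epsilon>) / (2 * (1 - \<delta>))) - quantile F ((1 - \<epsilon>) / (2 * (1 - \<delta>)))
         \<and> ((\<lambda>m. let G = (\<lambda>x. (1 - \<delta>) * F x + \<delta> * pointmass m x)
                in quantile G ((1 + \<epsilon>) / 2) - quantile G ((1 - \<epsilon>) / 2))
          \<longlongrightarrow> quantile F ((1 + \<epsilon>) / (2 * (1 - \<delta>))) - quantile F ((1 - \<epsilon>) / (2 * (1 - \<delta>)))) at_top"
  (is "?sup = ?L \<and> (?spread \<longlongrightarrow> ?L) at_top")
proof -
  (* f \<ge> 0 and monotonicity of f left of \<theta> are implied by the other hypotheses and not needed. *)
  interpret symmetric_unimodal_distfun F f \<theta>
    using F_df F_cont f_density f_symm f_unimodal(2) by unfold_locales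
  define c2 where "c2 = quantile F ((1 + \<epsilon>) / (2 * (1 - \<delta>)))"
  have attained: "?spread m = ?L" if "c2 < m" for m
    by (rule pointmass_contaminated_spread[OF F_df eps(1) del]) (use that in \<open>simp add: c2_def\<close>)
  have "?sup = ?L"
  proof (rule cSup_eq_maximum)
    have "(\<lambda>x. (1 - \<delta>) * F x + \<delta> * pointmass (c2 + 1) x) \<in> contam \<delta> F"
      unfolding contam_def using is_distfun_pointmass by blast
    then show "?L \<in> (\<lambda>G. quantile G ((1 + \<epsilon>) / 2) - quantile G ((1 - \<epsilon>) / 2)) ` contam \<delta> F"
      by (rule image_eqI[rotated]) (use attained[of "c2 + 1"] in \<open>simp add: Let_def\<close>)
  next
    fix y assume "y \<in> (\<lambda>G. quantile G ((1 + \<epsilon>) / 2) - quantile G ((1 - \<epsilon>) / 2)) ` contam \<delta> F"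
    then obtain G H where "y = quantile G ((1 + \<epsilon>) / 2) - quantile G ((1 - \<epsilon>) / 2)"
      and "is_distfun H" "G = (\<lambda>x. (1 - \<delta>) * F x + \<delta> * H x)"
      unfolding contam_def by blast
    then show "y \<le> ?L" using contaminated_spread_le eps del by blast
  qed
  moreover have "eventually (\<lambda>m. ?spread m = ?L) at_top"
    using eventually_gt_at_top[of c2] by (rule eventually_mono) (rule attained)
  then have "(?spread \<longlongrightarrow> ?L) at_top" by (rule tendsto_eventually)
  ultimately show ?thesis by simp
qed

end
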